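(* In an unweighted instance, for every facility placement profile $\mathbf{s}$, every rounded client profile $\sigma(\mathbf{s})$ for $\mathbf{s}$ is a client equilibrium.
   Context: Setting: a finite directed graph $H=(V,E)$ whose vertices are clients, all of weight $w(v)=1$ (unweighted); a finite set $F$ of facility agents; a facility placement profile $\mathbf{s}=(s_f)_{f\in F}$ with $s_f\in V$. Let $N(v)=\{v\}\cup\{u:(v,u)\in E\}$, $N_{\mathbf{s}}(v)=\{f\in F:s_f\in N(v)\}$, $A_{\mathbf{s}}(f)=\{v: f\in N_{\mathbf{s}}(v)\}$, $A_{\mathbf{s}}(T)=\bigcup_{f\in T}A_{\mathbf{s}}(f)$, $w(X)=|X|$. A client profile $\sigma(\mathbf{s})$ assigns to each client $v$ numbers $\sigma(\mathbf{s})_{v,f}\in[0,1]$ with $\sigma(\mathbf{s})_{v,f}=0$ for $f\notin N_{\mathbf{s}}(v)$ and $\sum_f\sigma(\mathbf{s})_{v,f}=1$ whenever $N_{\mathbf{s}}(v)\neq\varnothing$. Load $\ell_f=\sum_v\sigma(\mathbf{s})_{v,f}w(v)$; client cost $L_v=w(v)+\sum_{f\in N_{\mathbf{s}}(v)}\sigma(\mathbf{s})_{v,f}\ell_{-v,f}$ with $\ell_{-v,f}=\sum_{u\neq v}\sigma(\mathbf{s})_{u,f}w(u)$. $\sigma(\mathbf{s})$ is a client equilibrium if no client can strictly decrease her cost by unilaterally changing her own distribution. Minimum neighborhood set: for nonempty $F^*\subseteq F$, $V^*\subseteq V$, $\mathrm{MNS}_{\mathbf{s}}(F^*,V^* )$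 is the largest-cardinality subset among the nonempty $T\subseteq F^*$ minimizing $w(A_{\mathbf{s}}(T)\cap V^* )/|T|$. Class set: inductively, while facilities remain, $F_i=\mathrm{MNS}_{\mathbf{s}}(F\setminus\bigcup_{j<i}F_j, V\setminus\bigcup_{j<i}V_j)$, $V_i=A_{\mathbf{s}}(F_i)\setminus\bigcup_{j<i}V_j$, $C_i=(F_i,V_i)$, $\ell(C_i)=w(V_i)/|F_i|$. A client profile $\sigma(\mathbf{s})$ is rounded if for every class $C_i$ and every $f\in F_i$ we have $\ell_f\in\{\lfloor\ell(C_i)\rfloor,\lceil\ell(C_i)\rceil\}$, and for every class $C_i$ and every client $v\in V_i$ there is exactly one $g\in F_i$ with $\sigma(\mathbf{s})_{v,g}=1$. *)

theory Defs
  imports Complex_Main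
begin

(* Unweighted instance: every client has weight 1, so w(X) = card X. *)

definition nbhd :: "('v \<times> 'v) set \<Rightarrow> 'v \<Rightarrow> 'v set" where
  "nbhd E v = {v} \<union> {u. (v, u) \<in> E}"

definition Ns :: "('v \<times> 'v) set \<Rightarrow> 'f set \<Rightarrow> ('f \<Rightarrow> 'v) \<Rightarrow> 'v \<Rightarrow> 'f set" where
  "Ns E F s v = {f \<in> F. s f \<in> nbhd E v}"

definition As :: "'v set \<Rightarrow> ('v \<times> 'v) set \<Rightarrow> 'f set \<Rightarrow> ('f \<Rightarrow> 'v) \<Rightarrow> 'f set \<Rightarrow> 'v set" where
  "As V E F s T = {v \<in> V. \<exists>f\<in>T. f \<in> Ns E F s v}"

definition mns_ratio :: "'v set \<Rightarrow> ('v \<times> 'v) set \<Rightarrow> 'f set \<Rightarrow> ('f \<Rightarrow> 'v) \<Rightarrow> 'v set \<Rightarrow> 'f set \<Rightarrow> real" where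
  "mns_ratio V E F s Vst T = real (card (As V E F s T \<inter> Vst)) / real (card T)"

definition is_MNS :: "'v set \<Rightarrow> ('v \<times> 'v) set \<Rightarrow> 'f set \<Rightarrow> ('f \<Rightarrow> 'v) \<Rightarrow> 'f set \<Rightarrow> 'v set \<Rightarrow> 'f set \<Rightarrow> bool" where
  "is_MNS V E F s Fst Vst T \<longleftrightarrow>
     T \<subseteq> Fst \<and> T \<noteq> {} \<and>
     (\<forall>T'. T' \<subseteq> Fst \<and> T' \<noteq> {} \<longrightarrow> mns_ratio V E F s Vst T \<le> mns_ratio V E F s Vst T') \<and>
     (\<forall>T'. T' \<subseteq> Fst \<and> T' \<noteq> {} \<and> mns_ratio V E F s Vst T' = mns_ratio V E F s Vst T
           \<longrightarrow> card T' \<le> card T)"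

fun is_class_seq :: "'v set \<Rightarrow> ('v \<times> 'v) set \<Rightarrow> 'f set \<Rightarrow> ('f \<Rightarrow> 'v) \<Rightarrow> 'f set \<Rightarrow> 'v set
      \<Rightarrow> ('f set \<times> 'v set) list \<Rightarrow> bool" where
  "is_class_seq V E F s Fr Vr [] \<longleftrightarrow> Fr = {}"
| "is_class_seq V E F s Fr Vr ((Fi, Vi) # cs) \<longleftrightarrow>
     Fr \<noteq> {} \<and> is_MNS V E F s Fr Vr Fi \<and> Vi = As V E F s Fi \<inter> Vr \<and>
     is_class_seq V E F s (Fr - Fi) (Vr - Vi) cs"

definition class_set :: "'v set \<Rightarrow> ('v \<times> 'v) set \<Rightarrow> 'f set \<Rightarrow> ('f \<Rightarrow> 'v) \<Rightarrow> ('f set \<times> 'v set) list \<Rightarrow> bool" where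
  "class_set V E F s cs \<longleftrightarrow> is_class_seq V E F s F V cs"

definition valid_distr :: "('v \<times> 'v) set \<Rightarrow> 'f set \<Rightarrow> ('f \<Rightarrow> 'v) \<Rightarrow> 'v \<Rightarrow> ('f \<Rightarrow> real) \<Rightarrow> bool" where
  "valid_distr E F s v p \<longleftrightarrow>
     (\<forall>f\<in>F. 0 \<le> p f \<and> p f \<le> 1) \<and>
     (\<forall>f\<in>F. f \<notin> Ns E F s v \<longrightarrow> p f = 0) \<and>
     (Ns E F s v \<noteq> {} \<longrightarrow> (\<Sum>f\<in>F. p f) = 1)"

definition client_profile :: "'v set \<Rightarrow> ('v \<times> 'v) set \<Rightarrow> 'f set \<Rightarrow> ('f \<Rightarrow> 'v) \<Rightarrow> ('v \<Rightarrow> 'f \<Rightarrow> real) \<Rightarrow> bool" where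
  "client_profile V E F s \<sigma> \<longleftrightarrow> (\<forall>v\<in>V. valid_distr E F s v (\<sigma> v))"

definition load :: "'v set \<Rightarrow> ('v \<Rightarrow> 'f \<Rightarrow> real) \<Rightarrow> 'f \<Rightarrow> real" where
  "load V \<sigma> f = (\<Sum>v\<in>V. \<sigma> v f)"

definition load_minus :: "'v set \<Rightarrow> ('v \<Rightarrow> 'f \<Rightarrow> real) \<Rightarrow> 'v \<Rightarrow> 'f \<Rightarrow> real" where
  "load_minus V \<sigma> v f = (\<Sum>u\<in>V - {v}. \<sigma> u f)"

definition client_cost :: "'v set \<Rightarrow> ('v \<times> 'v) set \<Rightarrow> 'f set \<Rightarrow> ('f \<Rightarrow> 'v) \<Rightarrow> ('v \<Rightarrow> 'f \<Rightarrow> real) \<Rightarrow> 'v \<Rightarrow> real" where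
  "client_cost V E F s \<sigma> v = 1 + (\<Sum>f\<in>Ns E F s v. \<sigma> v f * load_minus V \<sigma> v f)"

definition client_equilibrium :: "'v set \<Rightarrow> ('v \<times> 'v) set \<Rightarrow> 'f set \<Rightarrow> ('f \<Rightarrow> 'v) \<Rightarrow> ('v \<Rightarrow> 'f \<Rightarrow> real) \<Rightarrow> bool" where
  "client_equilibrium V E F s \<sigma> \<longleftrightarrow>
     client_profile V E F s \<sigma> \<and>
     (\<forall>v\<in>V. \<forall>p. valid_distr E F s v p \<longrightarrow>
        \<not> client_cost V E F s (\<sigma>(v := p)) v < client_cost V E F s \<sigma> v)"

definition rounded :: "'v set \<Rightarrow> ('v \<times> 'v) set \<Rightarrow> 'f set \<Rightarrow> ('f \<Rightarrow> 'v) \<Rightarrow> ('v \<Rightarrow> 'f \<Rightarrow> real) \<Rightarrow> bool" where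
  "rounded V E F s \<sigma> \<longleftrightarrow>
     (\<exists>cs. class_set V E F s cs \<and>
        (\<forall>c \<in> set cs. let Fi = fst c; Vi = snd c in
           (\<forall>f\<in>Fi. load V \<sigma> f \<in> {of_int \<lfloor>real (card Vi) / real (card Fi)\<rfloor>,
                                    of_int \<lceil>real (card Vi) / real (card Fi)\<rceil>}) \<and>
           (\<forall>v\<in>Vi. \<exists>!g. g \<in> Fi \<and> \<sigma> v g = 1)))"

end

theory Submission
  imports Defs
begin

(* Minimality of F_i for the union F_i \<union> F_j with the next class gives a/m \<le> (a+b)/(m+n),
   i.e. a/m \<le> b/n, so the class loads l(C_i) increase along the class sequence. A client of
   V_i has no neighbouring facility in an earlier class (she would have been absorbed there),
   so by rounding her facility g carries at most ceil l(C_i) \<le> floor l(C_j) + 1 \<le> l_f + 1 for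
   every neighbouring facility f. Without her own unit, g is thus a least loaded neighbouring
   facility, and since her cost is linear in her own distribution she cannot improve. *)

definition class_load :: "'f set \<times> 'v set \<Rightarrow> real" where
  "class_load c = real (card (snd c)) / real (card (fst c))"

lemma As_subset: "As V E F s T \<subseteq> V"
  unfolding As_def by auto

lemma Ns_subset: "Ns E F s v \<subseteq> F"
  unfolding Ns_def by auto

lemma is_class_seq_ConsD:
  assumes "is_class_seq V E F s Fr Vr (c # cs)"
  shows "is_MNS V E F s Fr Vr (fst c)" "snd c = As V E F s (fst c) \<inter> Vr"
    and "is_class_seq V E F s (Fr - fst c) (Vr - snd c) cs"
  using assms by (cases c; simp)+

lemma is_class_seq_memberD:
  assumes "is_class_seq V E F s Fr Vr cs" "c \<in> set cs"
  shows "fst c \<subseteq> Fr \<and> snd c \<subseteq> Vr \<and> snd c \<subseteq> V"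
  using assms
proof (induction cs arbitrary: Fr Vr)
  case (Cons c0 cs)
  note head = is_class_seq_ConsD(1,2)[OF Cons.prems(1)]
  show ?case
  proof (cases "c = c0")
    case True
    then show ?thesis using head As_subset[of V E F s "fst c0"] unfolding is_MNS_def by auto
  next
    case False
    then show ?thesis
      using Cons.IH[OF is_class_seq_ConsD(3)[OF Cons.prems(1)]] Cons.prems(2) by auto
  qed
qed simp

lemma is_class_seq_covers_facility:
  assumes "is_class_seq V E F s Fr Vr cs" "f \<in> Fr"
  shows "\<exists>c\<in>set cs. f \<in> fst c"
  using assms
proof (induction cs arbitrary: Fr Vr)
  case (Cons c0 cs)
  then show ?case using is_class_seq_ConsD(3)[OF Cons.prems(1)] by (cases "f \<in> fst c0") auto
qed simp

lemma is_class_seq_covers_client: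
  assumes "is_class_seq V E F s Fr Vr cs" "v \<in> Vr" "v \<in> V" "f \<in> Fr" "f \<in> Ns E F s v"
  shows "\<exists>c\<in>set cs. v \<in> snd c"
  using assms
proof (induction cs arbitrary: Fr Vr)
  case (Cons c0 cs)
  show ?case
  proof (cases "v \<in> snd c0")
    case False
    then have "f \<notin> fst c0"
      using Cons.prems is_class_seq_ConsD(2)[OF Cons.prems(1)] unfolding As_def by auto
    then show ?thesis
      using False Cons.IH[OF is_class_seq_ConsD(3)[OF Cons.prems(1)]] Cons.prems by auto
  qed simp
qed simp

lemma mediant_le_imp_le:
  fixes a b m n :: real
  assumes "m > 0" "n > 0" "a / m \<le> (a + b) / (m + n)"
  shows "a / m \<le> b / n"
proof -
  have "a * (m + n) \<le> (a + b) * m" using assms by (simp add: field_simps)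
  then have "a * n \<le> b * m" by (simp add: algebra_simps)
  then show ?thesis using assms by (simp add: field_simps)
qed

lemma is_MNS_ratio_le:
  assumes "is_MNS V E F s Fst Vst T" "T' \<subseteq> Fst" "T' \<noteq> {}"
  shows "mns_ratio V E F s Vst T \<le> mns_ratio V E F s Vst T'"
  using assms unfolding is_MNS_def by blast

lemma class_load_le_next:
  assumes "finite V" "finite Fr"
    and "is_class_seq V E F s Fr Vr (ci # cj # cs)"
  shows "class_load ci \<le> class_load cj"
proof -
  obtain Fi Vi Fj Vj where c: "ci = (Fi, Vi)" "cj = (Fj, Vj)" by fastforce
  have mi: "is_MNS V E F s Fr Vr Fi" and Vi: "Vi = As V E F s Fi \<inter> Vr"
    and mj: "is_MNS V E F s (Fr - Fi) (Vr - Vi) Fj" and Vj: "Vj = As V E F s Fj \<inter> (Vr - Vi)"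
    using assms(3) unfolding c by auto
  have Fi: "Fi \<subseteq> Fr" "Fi \<noteq> {}" and Fj: "Fj \<subseteq> Fr - Fi" "Fj \<noteq> {}"
    using mi mj unfolding is_MNS_def by auto
  have "Vi \<subseteq> V" "Vj \<subseteq> V"
    using Vi Vj As_subset[of V E F s] by blast+
  then have fin: "finite Fi" "finite Fj" "finite Vi" "finite Vj"
    using Fi(1) Fj(1) assms(1,2) by (auto intro: finite_subset)
  have "As V E F s (Fi \<union> Fj) \<inter> Vr = Vi \<union> Vj"
    using Vi Vj unfolding As_def by auto
  moreover have "card (Vi \<union> Vj) = card Vi + card Vj"
    using fin Vj by (intro card_Un_disjoint) auto
  moreover have "card (Fi \<union> Fj) = card Fi + card Fj"
    using fin Fj(1) by (intro card_Un_disjoint) auto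
  ultimately have union_ratio: "mns_ratio V E F s Vr (Fi \<union> Fj)
      = (real (card Vi) + real (card Vj)) / (real (card Fi) + real (card Fj))"
    unfolding mns_ratio_def by simp
  have "Fi \<union> Fj \<subseteq> Fr" "Fi \<union> Fj \<noteq> {}"
    using Fi Fj by auto
  then have "mns_ratio V E F s Vr Fi \<le> mns_ratio V E F s Vr (Fi \<union> Fj)"
    by (rule is_MNS_ratio_le[OF mi])
  moreover have "mns_ratio V E F s Vr Fi = real (card Vi) / real (card Fi)"
    unfolding mns_ratio_def Vi ..
  ultimately have "real (card Vi) / real (card Fi)
      \<le> (real (card Vi) + real (card Vj)) / (real (card Fi) + real (card Fj))"
    using union_ratio by simp
  then show ?thesis
    using mediant_le_imp_le fin Fi(2) Fj(2) unfolding c class_load_def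
    by (simp add: card_gt_0_iff)
qed

lemma class_load_sorted:
  assumes "finite V" "finite Fr" "is_class_seq V E F s Fr Vr cs"
  shows "sorted (map class_load cs)"
  using assms(2,3)
proof (induction cs arbitrary: Fr Vr rule: induct_list012)
  case (3 ci cj cs)
  have "class_load ci \<le> class_load cj"
    using class_load_le_next[OF assms(1) "3.prems"] .
  moreover have "sorted (map class_load (cj # cs))"
    using "3.IH"(2)[OF _ is_class_seq_ConsD(3)[OF "3.prems"(2)]] "3.prems"(1) by simp
  ultimately show ?case by (simp only: list.map sorted2)
qed simp_all

lemma class_load_le_of_neighbour:
  assumes "finite V" "finite Fr" "is_class_seq V E F s Fr Vr cs"
    and "c \<in> set cs" "c' \<in> set cs" "v \<in> snd c" "f \<in> fst c'" "f \<in> Ns E F s v"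
  shows "class_load c \<le> class_load c'"
  using assms(2-)
proof (induction cs arbitrary: Fr Vr)
  case (Cons c0 cs)
  note head = is_class_seq_ConsD(2)[OF Cons.prems(2)]
  note tail = is_class_seq_ConsD(3)[OF Cons.prems(2)]
  have head_min: "\<forall>c''\<in>set cs. class_load c0 \<le> class_load c''"
    using class_load_sorted[OF assms(1) Cons.prems(1,2)] by simp
  consider "c \<in> set cs" "c' \<in> set cs" | "c = c0" | "c \<in> set cs" "c' = c0"
    using Cons.prems(3,4) by auto
  then show ?case
  proof cases
    case 1
    then show ?thesis using Cons.IH[OF _ tail] Cons.prems(1,5-7) by blast
  next
    case 2
    then show ?thesis using head_min Cons.prems(4) by auto
  next
    case 3
    have "v \<in> Vr - snd c0" "v \<in> V"
      using is_class_seq_memberD[OF tail \<open>c \<in> set cs\<close>] Cons.prems(5) by auto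
    moreover have "v \<in> As V E F s (fst c0)"
      using 3 Cons.prems(6,7) \<open>v \<in> V\<close> unfolding As_def by auto
    ultimately show ?thesis using head by blast
  qed
qed simp

lemma rounded_values_le_plus_one:
  fixes x y a b :: real
  assumes "x \<le> y" "a \<in> {of_int \<lfloor>x\<rfloor>, of_int \<lceil>x\<rceil>}" "b \<in> {of_int \<lfloor>y\<rfloor>, of_int \<lceil>y\<rceil>}"
  shows "a \<le> b + 1"
proof -
  have "a \<le> of_int \<lceil>x\<rceil>" "of_int \<lfloor>y\<rfloor> \<le> b"
    using assms(2,3) le_of_int_ceiling[of x] of_int_floor_le[of y] by auto
  moreover have "of_int \<lceil>x\<rceil> \<le> (of_int \<lfloor>x\<rfloor> :: real) + 1"
    by (simp add: ceiling_altdef)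
  moreover have "of_int \<lfloor>x\<rfloor> \<le> (of_int \<lfloor>y\<rfloor> :: real)"
    using assms(1) floor_mono by simp
  ultimately show ?thesis by linarith
qed

lemma rounded_assigned_facility_load_le:
  assumes "finite V" "finite F" "rounded V E F s \<sigma>"
    and "v \<in> V" "Ns E F s v \<noteq> {}"
  obtains g where "g \<in> F" "\<sigma> v g = 1" "\<And>f. f \<in> Ns E F s v \<Longrightarrow> load V \<sigma> g \<le> load V \<sigma> f + 1"
proof -
  obtain cs where seq: "is_class_seq V E F s F V cs"
    and rd: "\<And>c. c \<in> set cs \<Longrightarrow>
        (\<forall>f\<in>fst c. load V \<sigma> f \<in> {of_int \<lfloor>class_load c\<rfloor>, of_int \<lceil>class_load c\<rceil>}) \<and>
        (\<forall>u\<in>snd c. \<exists>!g. g \<in> fst c \<and> \<sigma> u g = 1)"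
    using assms(3) unfolding rounded_def class_set_def class_load_def Let_def by blast
  obtain f0 where f0: "f0 \<in> Ns E F s v" using assms(5) by blast
  then have "f0 \<in> F" using Ns_subset[of E F s v] by blast
  then obtain c where c: "c \<in> set cs" "v \<in> snd c"
    using is_class_seq_covers_client[OF seq assms(4,4) _ f0] by blast
  then obtain g where g: "g \<in> fst c" "\<sigma> v g = 1" using rd[OF c(1)] by blast
  show thesis
  proof
    show "g \<in> F" using is_class_seq_memberD[OF seq c(1)] g(1) by blast
    show "\<sigma> v g = 1" by fact
    fix f assume f: "f \<in> Ns E F s v"
    then have "f \<in> F" using Ns_subset[of E F s v] by blast
    then obtain c' where c': "c' \<in> set cs" "f \<in> fst c'"
      using is_class_seq_covers_facility[OF seq] by blast
    have "class_load c \<le> class_load c'"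
      using class_load_le_of_neighbour[OF assms(1,2) seq c(1) c'(1) c(2) c'(2) f] .
    moreover have "load V \<sigma> g \<in> {of_int \<lfloor>class_load c\<rfloor>, of_int \<lceil>class_load c\<rceil>}"
      using rd[OF c(1)] g(1) by blast
    moreover have "load V \<sigma> f \<in> {of_int \<lfloor>class_load c'\<rfloor>, of_int \<lceil>class_load c'\<rceil>}"
      using rd[OF c'(1)] c'(2) by blast
    ultimately show "load V \<sigma> g \<le> load V \<sigma> f + 1"
      by (rule rounded_values_le_plus_one)
  qed
qed

lemma load_eq_load_minus_plus:
  assumes "finite V" "v \<in> V"
  shows "load V \<sigma> f = load_minus V \<sigma> v f + \<sigma> v f"
  unfolding load_def load_minus_def using sum.remove[OF assms] by (simp add: add.commute)

lemma valid_distr_sum_Ns: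
  assumes "finite F" "valid_distr E F s v p" "Ns E F s v \<noteq> {}"
  shows "(\<Sum>f\<in>Ns E F s v. p f) = 1"
proof -
  have "(\<Sum>f\<in>Ns E F s v. p f) = (\<Sum>f\<in>F. p f)"
    using assms(1,2) Ns_subset[of E F s v] unfolding valid_distr_def
    by (intro sum.mono_neutral_left) auto
  then show ?thesis using assms(2,3) unfolding valid_distr_def by simp
qed

lemma valid_distr_pure:
  assumes "finite F" "valid_distr E F s v p" "g \<in> F" "p g = 1"
  shows "g \<in> Ns E F s v" and "\<And>f. f \<in> F \<Longrightarrow> f \<noteq> g \<Longrightarrow> p f = 0"
proof -
  show gN: "g \<in> Ns E F s v"
    using assms(2-4) unfolding valid_distr_def by force
  have "(\<Sum>f\<in>F. p f) = 1" using assms(2) gN unfolding valid_distr_def by blast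
  then have "(\<Sum>f\<in>F - {g}. p f) = 0" using sum.remove[OF assms(1,3), of p] assms(4) by simp
  moreover have "\<forall>f\<in>F - {g}. 0 \<le> p f" using assms(2) unfolding valid_distr_def by auto
  ultimately show "\<And>f. f \<in> F \<Longrightarrow> f \<noteq> g \<Longrightarrow> p f = 0"
    using sum_nonneg_eq_0_iff[of "F - {g}" p] assms(1) by auto
qed

lemma load_minus_assigned_le:
  assumes "finite V" "v \<in> V" "finite F" "valid_distr E F s v (\<sigma> v)" "g \<in> F" "\<sigma> v g = 1"
    and "f \<in> F" "load V \<sigma> g \<le> load V \<sigma> f + 1"
  shows "load_minus V \<sigma> v g \<le> load_minus V \<sigma> v f"
proof (cases "f = g")
  case False
  then have "\<sigma> v f = 0" using valid_distr_pure(2)[OF assms(3-6,7)] by blast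
  then show ?thesis using assms(6,8) load_eq_load_minus_plus[OF assms(1,2), of \<sigma>] by simp
qed simp

lemma client_cost_pure:
  assumes "finite F" "valid_distr E F s v (\<sigma> v)" "g \<in> F" "\<sigma> v g = 1"
  shows "client_cost V E F s \<sigma> v = 1 + load_minus V \<sigma> v g"
proof -
  note pure = valid_distr_pure[OF assms]
  have "(\<Sum>f\<in>Ns E F s v. \<sigma> v f * load_minus V \<sigma> v f)
      = (\<Sum>f\<in>Ns E F s v. if f = g then load_minus V \<sigma> v g else 0)"
    using pure(2) Ns_subset[of E F s v] assms(4) by (intro sum.cong) auto
  also have "\<dots> = load_minus V \<sigma> v g"
    using pure(1) finite_subset[OF Ns_subset[of E F s v] assms(1)] by simp
  finally show ?thesis unfolding client_cost_def by simp
qed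

lemma client_cost_update:
  "client_cost V E F s (\<sigma>(v := p)) v = 1 + (\<Sum>f\<in>Ns E F s v. p f * load_minus V \<sigma> v f)"
proof -
  have "load_minus V (\<sigma>(v := p)) v f = load_minus V \<sigma> v f" for f
    unfolding load_minus_def by (rule sum.cong) auto
  then show ?thesis unfolding client_cost_def by simp
qed

lemma pure_best_response:
  assumes "finite F" "valid_distr E F s v (\<sigma> v)" "g \<in> F" "\<sigma> v g = 1"
    and least: "\<And>f. f \<in> Ns E F s v \<Longrightarrow> load_minus V \<sigma> v g \<le> load_minus V \<sigma> v f"
    and p: "valid_distr E F s v p"
  shows "client_cost V E F s \<sigma> v \<le> client_cost V E F s (\<sigma>(v := p)) v"
proof -
  have gN: "g \<in> Ns E F s v" using valid_distr_pure(1)[OF assms(1-4)] .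
  have "load_minus V \<sigma> v g = (\<Sum>f\<in>Ns E F s v. p f * load_minus V \<sigma> v g)"
    using valid_distr_sum_Ns[OF assms(1) p] gN by (auto simp: sum_distrib_right[symmetric])
  also have "\<dots> \<le> (\<Sum>f\<in>Ns E F s v. p f * load_minus V \<sigma> v f)"
    using p least Ns_subset[of E F s v] unfolding valid_distr_def
    by (intro sum_mono mult_left_mono) auto
  finally have "load_minus V \<sigma> v g \<le> (\<Sum>f\<in>Ns E F s v. p f * load_minus V \<sigma> v f)" .
  moreover have "client_cost V E F s \<sigma> v = 1 + load_minus V \<sigma> v g"
    using assms(1-4) by (rule client_cost_pure)
  ultimately show ?thesis
    unfolding client_cost_update by simp
qed

theorem mainTheorem9:
  fixes V :: "'v set" and E :: "('v \<times> 'v) set" and F :: "'f set"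
    and s :: "'f \<Rightarrow> 'v" and \<sigma> :: "'v \<Rightarrow> 'f \<Rightarrow> real"
  assumes "finite V" and "E \<subseteq> V \<times> V" and "finite F"
    and "\<forall>f\<in>F. s f \<in> V"
    and "client_profile V E F s \<sigma>"
    and "rounded V E F s \<sigma>"
  shows "client_equilibrium V E F s \<sigma>"
  unfolding client_equilibrium_def
proof (intro conjI ballI allI impI)
  show "client_profile V E F s \<sigma>" by fact
  fix v p
  assume v: "v \<in> V" and p: "valid_distr E F s v p"
  show "\<not> client_cost V E F s (\<sigma>(v := p)) v < client_cost V E F s \<sigma> v"
  proof (cases "Ns E F s v = {}")
    case True
    then show ?thesis unfolding client_cost_def by simp
  next
    case False
    obtain g where g: "g \<in> F" "\<sigma> v g = 1"
      and gap: "\<And>f. f \<in> Ns E F s v \<Longrightarrow> load V \<sigma> g \<le> load V \<sigma> f + 1"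
      using rounded_assigned_facility_load_le[OF assms(1,3,6) v False] by blast
    have vd: "valid_distr E F s v (\<sigma> v)" using assms(5) v unfolding client_profile_def by blast
    have least: "load_minus V \<sigma> v g \<le> load_minus V \<sigma> v f" if "f \<in> Ns E F s v" for f
      using load_minus_assigned_le[OF assms(1) v assms(3) vd g _ gap[OF that]]
        that Ns_subset[of E F s v] by blast
    show ?thesis using pure_best_response[OF assms(3) vd g least p] by (simp add: not_less)
  qed
qed

end
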